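(* Let $\mathcal{E}$ be a metric space, $\lambda,\kappa,\mu\colon\mathcal{E}\to[0,\infty)$ continuous, $t\ge0$, and let $\{J_n\}_{n\in\mathbb{N}}$ be $\mathcal{E}$-valued càdlàg processes such that the laws $\nu_n$ of $\phi_t(J_n)$ on $\mathbb{R}$ satisfy a large deviations principle with rate function $\psi$. Then the set $\mathcal{R}(t)$ of attainable parameters at time $t$ is a non-empty closed subset of $[0,\infty)$ and $\{\gamma:\psi(\gamma)<\infty\}\subset\mathcal{R}(t)$.
   Context: $\phi_t(f)=\int_0^t\lambda(f(s))\exp(-\kappa(f(s))\int_s^t\mu(f(r))\,dr)\,ds$ for càdlàg $f\colon[0,\infty)\to\mathcal{E}$. A sequence of probability measures $\nu_n$ satisfies an LDP with rate function $\psi$ if $\psi\colon\mathbb{R}\to[0,\infty]$ is lower semicontinuous, $\limsup\frac1n\log\nu_n(F)\le-\inf_F\psi$ for closed $F$ and $\liminf\frac1n\log\nu_n(G)\ge-\inf_G\psi$ for open $G$. A number $\gamma\in[0,\infty)$ is an attainable parameter at time $t$ if for every $\epsilon>0$ there exists $N_\epsilon$ such that $\nu_n((\gamma-\epsilon,\gamma+\epsilon))>0$ for all $n\ge N_\epsilon$; $\mathcal{R}(t)$ denotes the set of such $\gamma$. *)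

theory Defs
  imports "HOL-Probability.Probability"
begin

text \<open>A path f : [0,\<infinity>) \<rightarrow> E (represented as a function on real; only values
  on [0,\<infinity>) matter) is cadlag: right-continuous at every s \<ge> 0 and with a
  left limit at every s > 0.\<close>
definition cadlag :: "(real \<Rightarrow> 'e::metric_space) \<Rightarrow> bool" where
  "cadlag f \<longleftrightarrow> (\<forall>s\<ge>0. continuous (at_right s) f \<and> (s > 0 \<longrightarrow> (\<exists>l. (f \<longlongrightarrow> l) (at_left s))))"

definition phi :: "('e \<Rightarrow> real) \<Rightarrow> ('e \<Rightarrow> real) \<Rightarrow> ('e \<Rightarrow> real) \<Rightarrow> real \<Rightarrow> (real \<Rightarrow> 'e) \<Rightarrow> real" where
  "phi lam kap mu t f =
     integral {0..t} (\<lambda>s. lam (f s) * exp (- kap (f s) * integral {s..t} (\<lambda>r. mu (f r))))"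

definition scaled_log :: "nat \<Rightarrow> real \<Rightarrow> ereal" where
  "scaled_log n p = (if p = 0 then - \<infinity> else ereal (ln p / real n))"

definition LDP :: "(nat \<Rightarrow> real measure) \<Rightarrow> (real \<Rightarrow> ereal) \<Rightarrow> bool" where
  "LDP nu psi \<longleftrightarrow>
     (\<forall>x. psi x \<ge> 0) \<and>
     (\<forall>c. closed {x. psi x \<le> c}) \<and>
     (\<forall>F. closed F \<longrightarrow> limsup (\<lambda>n. scaled_log n (measure (nu n) F)) \<le> - (INF x\<in>F. psi x)) \<and>
     (\<forall>G. open G \<longrightarrow> liminf (\<lambda>n. scaled_log n (measure (nu n) G)) \<ge> - (INF x\<in>G. psi x))"

definition attainable :: "(nat \<Rightarrow> real measure) \<Rightarrow> real set" where
  "attainable nu = {\<gamma>. \<gamma> \<ge> 0 \<and>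
     (\<forall>\<epsilon>>0. \<exists>N. \<forall>n\<ge>N. measure (nu n) {\<gamma> - \<epsilon> <..< \<gamma> + \<epsilon>} > 0)}"

end

theory Submission
  imports Defs
begin

text \<open>Points of finite rate are attainable because the LDP lower bound on a small open
  interval around such a point forces its mass to be at least \<open>exp (-n (\<psi> \<gamma> + 1))\<close> eventually,
  in particular positive. Since \<open>\<phi>\<^sub>t \<ge> 0\<close> these points are nonnegative, and the LDP upper bound
  for the whole line (of mass 1) shows that \<open>\<psi>\<close> is finite somewhere, so the set is nonempty.
  Closedness only uses monotonicity of the measures: an interval around a nearby attainable
  point is contained in a slightly larger interval around the limit.\<close>

lemma phi_nonneg:
  assumes "\<And>x. lam x \<ge> 0" and "\<And>x. kap x \<ge> 0" and "\<And>x. mu x \<ge> 0"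
  shows "phi lam kap mu t f \<ge> 0"
proof (cases "(\<lambda>s. lam (f s) * exp (- kap (f s) * integral {s..t} (\<lambda>r. mu (f r)))) integrable_on {0..t}")
  case True
  then show ?thesis unfolding phi_def
    by (intro integral_nonneg) (auto intro: mult_nonneg_nonneg assms)
next
  case False
  then show ?thesis unfolding phi_def by (simp add: not_integrable_integral)
qed

lemma attainable_iff:
  "\<gamma> \<in> attainable nu \<longleftrightarrow>
     \<gamma> \<ge> 0 \<and> (\<forall>\<epsilon>>0. eventually (\<lambda>n. measure (nu n) {\<gamma> - \<epsilon> <..< \<gamma> + \<epsilon>} > 0) sequentially)"
  unfolding attainable_def eventually_sequentially by simp

lemma attainable_subset_nonneg: "attainable nu \<subseteq> {0..}"
  by (auto simp: attainable_iff)

lemma LDP_eventually_measure_pos: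
  assumes "LDP nu psi" and "open G" and "\<gamma> \<in> G" and "psi \<gamma> < \<infinity>"
  shows "eventually (\<lambda>n. measure (nu n) G > 0) sequentially"
proof -
  have "psi \<gamma> \<ge> 0" using assms(1) by (simp add: LDP_def)
  then obtain r where r: "psi \<gamma> = ereal r" using assms(4) by (cases "psi \<gamma>") auto
  have "ereal (- r - 1) < - psi \<gamma>" using r by simp
  also have "\<dots> \<le> - (INF x\<in>G. psi x)" using assms(3) by (simp add: INF_lower)
  also have "\<dots> \<le> liminf (\<lambda>n. scaled_log n (measure (nu n) G))"
    using assms(1,2) by (simp add: LDP_def)
  finally have "eventually (\<lambda>n. ereal (- r - 1) < scaled_log n (measure (nu n) G)) sequentially"
    by (rule less_LiminfD)
  then show ?thesis
    by eventually_elim (auto simp: scaled_log_def zero_less_measure_iff)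
qed

lemma LDP_rate_finite_somewhere:
  assumes "LDP nu psi" and "\<And>n. prob_space (nu n)" and "\<And>n. sets (nu n) = sets borel"
  shows "\<exists>x. psi x < \<infinity>"
proof (rule ccontr)
  assume "\<nexists>x. psi x < \<infinity>"
  then have "(INF x. psi x) = \<infinity>" by (simp add: top.not_eq_extremum)
  moreover have "(\<lambda>n. scaled_log n (measure (nu n) UNIV)) = (\<lambda>n. 0)"
    using prob_space.prob_space[OF assms(2)] sets_eq_imp_space_eq[OF assms(3)]
    by (simp add: scaled_log_def zero_ereal_def)
  moreover have "limsup (\<lambda>n. scaled_log n (measure (nu n) UNIV)) \<le> - (INF x. psi x)"
    using assms(1) by (simp add: LDP_def)
  ultimately show False by (simp add: Limsup_const)
qed

text \<open>For \<open>\<gamma> < 0\<close> the neighbourhood \<open>(2\<gamma>, 0)\<close> lies in the negative axis.\<close>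

lemma nonneg_if_eventually_measure_pos:
  fixes nu :: "nat \<Rightarrow> real measure"
  assumes "\<And>n. finite_measure (nu n)" and "\<And>n. sets (nu n) = sets borel"
    and "\<And>n. measure (nu n) {..<0} = 0"
    and "\<And>\<epsilon>. \<epsilon> > 0 \<Longrightarrow> eventually (\<lambda>n. measure (nu n) {\<gamma> - \<epsilon> <..< \<gamma> + \<epsilon>} > 0) sequentially"
  shows "\<gamma> \<ge> 0"
proof (rule ccontr)
  assume "\<not> \<gamma> \<ge> 0"
  then obtain n where pos: "measure (nu n) {\<gamma> - (- \<gamma>) <..< \<gamma> + (- \<gamma>)} > 0"
    using assms(4)[of "- \<gamma>"] eventually_happens'[OF sequentially_bot] by force
  have "measure (nu n) {\<gamma> - (- \<gamma>) <..< \<gamma> + (- \<gamma>)} \<le> measure (nu n) {..<0}"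
    using assms(1,2) by (intro finite_measure.finite_measure_mono) auto
  with pos assms(3) show False by simp
qed

lemma closed_attainable:
  assumes "\<And>n. finite_measure (nu n)" and "\<And>n. sets (nu n) = sets borel"
  shows "closed (attainable nu)"
  unfolding closed_sequential_limits
proof (intro allI impI, elim conjE)
  fix s l assume s: "\<forall>k. s k \<in> attainable nu" and l: "s \<longlonglongrightarrow> l"
  have "l \<ge> 0"
    using s attainable_subset_nonneg by (intro LIMSEQ_le_const[OF l]) auto
  moreover have "eventually (\<lambda>n. measure (nu n) {l - e <..< l + e} > 0) sequentially"
    if "e > 0" for e
  proof -
    obtain k where k: "dist (s k) l < e/2"
      using LIMSEQ_D[OF l, of "e/2"] \<open>e > 0\<close> by (auto simp: dist_norm)
    then have "s k - l < e/2" and "l - s k < e/2"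
      unfolding dist_real_def by arith+
    then have sub: "{s k - e/2 <..< s k + e/2} \<subseteq> {l - e <..< l + e}"
      by auto
    have "eventually (\<lambda>n. measure (nu n) {s k - e/2 <..< s k + e/2} > 0) sequentially"
      using s \<open>e > 0\<close> by (simp add: attainable_iff)
    then show ?thesis
    proof eventually_elim
      case (elim n)
      have "measure (nu n) {s k - e/2 <..< s k + e/2} \<le> measure (nu n) {l - e <..< l + e}"
        using sub assms by (intro finite_measure.finite_measure_mono) auto
      with elim show ?case by linarith
    qed
  qed
  ultimately show "l \<in> attainable nu" by (simp add: attainable_iff)
qed

theorem lemma1:
  fixes lam kap mu :: "'e::metric_space \<Rightarrow> real"
    and t :: real
    and M :: "nat \<Rightarrow> 'w measure"
    and J :: "nat \<Rightarrow> 'w \<Rightarrow> real \<Rightarrow> 'e"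
    and psi :: "real \<Rightarrow> ereal"
  assumes "continuous_on UNIV lam" "continuous_on UNIV kap" "continuous_on UNIV mu"
    and "\<And>x. lam x \<ge> 0" "\<And>x. kap x \<ge> 0" "\<And>x. mu x \<ge> 0"
    and "t \<ge> 0"
    and "\<And>n. prob_space (M n)"
    and "\<And>n \<omega>. \<omega> \<in> space (M n) \<Longrightarrow> cadlag (J n \<omega>)"
    and "\<And>n. (\<lambda>\<omega>. phi lam kap mu t (J n \<omega>)) \<in> borel_measurable (M n)"
    and "LDP (\<lambda>n. distr (M n) borel (\<lambda>\<omega>. phi lam kap mu t (J n \<omega>))) psi"
  shows "attainable (\<lambda>n. distr (M n) borel (\<lambda>\<omega>. phi lam kap mu t (J n \<omega>))) \<noteq> {}
    \<and> closed (attainable (\<lambda>n. distr (M n) borel (\<lambda>\<omega>. phi lam kap mu t (J n \<omega>))))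
    \<and> attainable (\<lambda>n. distr (M n) borel (\<lambda>\<omega>. phi lam kap mu t (J n \<omega>))) \<subseteq> {0..}
    \<and> {\<gamma>. psi \<gamma> < \<infinity>} \<subseteq> attainable (\<lambda>n. distr (M n) borel (\<lambda>\<omega>. phi lam kap mu t (J n \<omega>)))"
proof -
  define nu where "nu = (\<lambda>n. distr (M n) borel (\<lambda>\<omega>. phi lam kap mu t (J n \<omega>)))"
  have prob: "prob_space (nu n)" for n
    unfolding nu_def using assms(8,10) by (rule prob_space.prob_space_distr)
  then have fin: "finite_measure (nu n)" for n
    by (simp add: prob_space_def)
  have sets: "sets (nu n) = sets borel" for n by (simp add: nu_def)
  have no_neg: "measure (nu n) {..<0} = 0" for n
  proof -
    have "(\<lambda>\<omega>. phi lam kap mu t (J n \<omega>)) -` {..<0} = {}"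
      using phi_nonneg[of lam kap mu, OF assms(4-6)] by (auto simp: not_less[symmetric])
    then show ?thesis by (simp add: nu_def measure_distr[OF assms(10)])
  qed
  have finite_rate: "{\<gamma>. psi \<gamma> < \<infinity>} \<subseteq> attainable nu"
  proof safe
    fix \<gamma> assume "psi \<gamma> < \<infinity>"
    then have "eventually (\<lambda>n. measure (nu n) {\<gamma> - \<epsilon> <..< \<gamma> + \<epsilon>} > 0) sequentially"
      if "\<epsilon> > 0" for \<epsilon>
      using assms(11) that by (intro LDP_eventually_measure_pos) (auto simp: nu_def)
    then show "\<gamma> \<in> attainable nu"
      using nonneg_if_eventually_measure_pos[of nu, OF fin sets no_neg] by (simp add: attainable_iff)
  qed
  moreover have "attainable nu \<noteq> {}"
    using LDP_rate_finite_somewhere[OF assms(11)[folded nu_def] prob sets] finite_rate by blast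
  ultimately show ?thesis
    using closed_attainable[of nu, OF fin sets] attainable_subset_nonneg[of nu]
    unfolding nu_def by blast
qed

end
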